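(* Let $\mathbb{F}$ be a field, let $A$ be a finite set equipped with a linear ordering $\preceq$, and let $k\ge 2$ be an integer. Let $f:A^k\to\mathbb{F}$ be a function such that $f(x_1,x_2,\ldots,x_k)\neq 0$ implies $x_1\preceq x_i\preceq x_k$ for all $i=1,2,\ldots,k$. Then the slice rank of $f$ is at least \[\bigl|\{x\in A: f(x,x,\ldots,x)\neq 0\}\bigr|.\]
   Context: A function $g:A^k\to\mathbb{F}$ is called a slice if it can be written as $g(x_1,\ldots,x_k)=h(x_i)\,g'(x_1,\ldots,x_{i-1},x_{i+1},\ldots,x_k)$ for some $1\le i\le k$ and some functions $h:A\to\mathbb{F}$ and $g':A^{k-1}\to\mathbb{F}$. The slice rank of a function $f:A^k\to\mathbb{F}$ is the minimum number $r$ such that $f$ can be written as a sum of $r$ slices. (For $k=2$ this is the usual matrix rank.) *)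

theory Defs
  imports "HOL-Library.FuncSet"
begin

text \<open>Points of A^k are represented as extensional functions
  x in PiE {..<k} (%_. A) (coordinates indexed 0..k-1).\<close>

definition is_slice :: "'a set \<Rightarrow> nat \<Rightarrow> ((nat \<Rightarrow> 'a) \<Rightarrow> 'b::field) \<Rightarrow> bool" where
  "is_slice A k g \<longleftrightarrow>
     (\<exists>i<k. \<exists>(h::'a \<Rightarrow> 'b) (g'::(nat \<Rightarrow> 'a) \<Rightarrow> 'b).
        \<forall>x \<in> {..<k} \<rightarrow>\<^sub>E A. g x = h (x i) * g' (x(i := undefined)))"

definition slice_rank :: "'a set \<Rightarrow> nat \<Rightarrow> ((nat \<Rightarrow> 'a) \<Rightarrow> 'b::field) \<Rightarrow> nat" where
  "slice_rank A k f = (LEAST r. \<exists>gs :: nat \<Rightarrow> (nat \<Rightarrow> 'a) \<Rightarrow> 'b.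
      (\<forall>j<r. is_slice A k (gs j)) \<and>
      (\<forall>x \<in> {..<k} \<rightarrow>\<^sub>E A. f x = (\<Sum>j<r. gs j x)))"

end

theory Submission
  imports Defs
begin

text \<open>Remove the slices one at a time. If the last slice is h(x_i) g'(x without x_i), choose a pivot c
  in the support of h, the largest one if i = 0 and the smallest one if i = k - 1, and pass to
  f(x) - h(x_i)/h(c) f(x with x_i := c) on (A - {c})^k. This kills that slice, keeps the other
  summands slices, leaves the diagonal unchanged away from c and, thanks to the choice of c, preserves
  the support condition "x_0 < x_(k-1) or x is constant". So every slice accounts for at most one
  point of the diagonal support.\<close>

lemma PiE_fun_upd_same:
  "x \<in> Pi\<^sub>E I B \<Longrightarrow> i \<in> I \<Longrightarrow> c \<in> B i \<Longrightarrow> x(i := c) \<in> Pi\<^sub>E I B"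
  using PiE_fun_upd[of c B i x I] by (simp add: insert_absorb)

lemma is_slice_subset:
  assumes "is_slice A k g" "B \<subseteq> A"
  shows "is_slice B k g"
proof -
  obtain i h g' where "i < k" "\<forall>x \<in> {..<k} \<rightarrow>\<^sub>E A. g x = h (x i) * g' (x(i := undefined))"
    using assms(1) unfolding is_slice_def by blast
  moreover have "{..<k} \<rightarrow>\<^sub>E B \<subseteq> {..<k} \<rightarrow>\<^sub>E A" using assms(2) by (intro PiE_mono) auto
  ultimately show ?thesis unfolding is_slice_def by blast
qed

definition elim_coord ::
    "nat \<Rightarrow> ('a \<Rightarrow> 'b::field) \<Rightarrow> 'a \<Rightarrow> ((nat \<Rightarrow> 'a) \<Rightarrow> 'b) \<Rightarrow> (nat \<Rightarrow> 'a) \<Rightarrow> 'b" where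
  "elim_coord i h c g x = g x - h (x i) / h c * g (x(i := c))"

lemma elim_coord_sum:
  assumes sum: "\<forall>x \<in> {..<k} \<rightarrow>\<^sub>E B. f x = (\<Sum>j<r. gs j x)"
    and x: "x \<in> {..<k} \<rightarrow>\<^sub>E B" and "i < k" "c \<in> B"
  shows "elim_coord i h c f x = (\<Sum>j<r. elim_coord i h c (gs j) x)"
proof -
  have "x(i := c) \<in> {..<k} \<rightarrow>\<^sub>E B" using PiE_fun_upd_same[OF x] assms(3,4) by simp
  then have "f x = (\<Sum>j<r. gs j x)" "f (x(i := c)) = (\<Sum>j<r. gs j (x(i := c)))"
    using sum x by blast+
  then show ?thesis unfolding elim_coord_def by (simp add: sum_subtractf sum_distrib_left)
qed

lemma elim_coord_slice_vanishes:
  assumes slice: "\<forall>x \<in> {..<k} \<rightarrow>\<^sub>E B. g x = h (x i) * g' (x(i := undefined))"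
    and x: "x \<in> {..<k} \<rightarrow>\<^sub>E B" and "i < k" "c \<in> B" "h c \<noteq> 0"
  shows "elim_coord i h c g x = 0"
proof -
  have "x(i := c) \<in> {..<k} \<rightarrow>\<^sub>E B" using PiE_fun_upd_same[OF x] assms(3,4) by simp
  then have "g x = h (x i) * g' (x(i := undefined))" "g (x(i := c)) = h c * g' (x(i := undefined))"
    using slice x by auto
  then show ?thesis using \<open>h c \<noteq> 0\<close> by (simp add: elim_coord_def)
qed

lemma is_slice_elim_coord:
  fixes g :: "(nat \<Rightarrow> 'a) \<Rightarrow> 'b::field"
  assumes "is_slice B k g" "i < k" "c \<in> B"
  shows "is_slice B k (elim_coord i h c g)"
proof -
  from assms(1) obtain l hl gl where "l < k"
    and eq: "\<forall>x \<in> {..<k} \<rightarrow>\<^sub>E B. g x = hl (x l) * gl (x(l := undefined))"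
    unfolding is_slice_def by blast
  have upd: "x(i := c) \<in> {..<k} \<rightarrow>\<^sub>E B" if "x \<in> {..<k} \<rightarrow>\<^sub>E B" for x
    using PiE_fun_upd_same[OF that] assms(2,3) by simp
  show ?thesis
  proof (cases "l = i")
    case True
    show ?thesis unfolding is_slice_def
    proof (intro exI[of _ i] conjI exI[of _ "\<lambda>a. hl a - h a / h c * hl c"] exI[of _ gl] ballI)
      fix x assume x: "x \<in> {..<k} \<rightarrow>\<^sub>E B"
      have "g x = hl (x i) * gl (x(i := undefined))" "g (x(i := c)) = hl c * gl (x(i := undefined))"
        using eq x upd[OF x] True by auto
      then show "elim_coord i h c g x = (hl (x i) - h (x i) / h c * hl c) * gl (x(i := undefined))"
        unfolding elim_coord_def by (simp add: left_diff_distrib)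
    qed fact
  next
    case False
    show ?thesis unfolding is_slice_def
    proof (intro exI[of _ l] conjI exI[of _ hl]
        exI[of _ "\<lambda>y. gl y - h (y i) / h c * gl (y(i := c))"] ballI)
      fix x assume x: "x \<in> {..<k} \<rightarrow>\<^sub>E B"
      have "x(i := c, l := undefined) = x(l := undefined, i := c)" "(x(i := c)) l = x l"
        using False by (simp_all add: fun_upd_twist)
      then have "g x = hl (x l) * gl (x(l := undefined))"
        "g (x(i := c)) = hl (x l) * gl (x(l := undefined, i := c))"
        using eq x upd[OF x] by auto
      then show "elim_coord i h c g x = hl (x l) * (gl (x(l := undefined))
          - h ((x(l := undefined)) i) / h c * gl (x(l := undefined, i := c)))"
        using False unfolding elim_coord_def by (simp add: right_diff_distrib mult.left_commute)
    qed fact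
  qed
qed

definition triangular_support ::
    "nat \<Rightarrow> 'a::linorder set \<Rightarrow> ((nat \<Rightarrow> 'a) \<Rightarrow> 'b::zero) \<Rightarrow> bool" where
  "triangular_support k B f \<longleftrightarrow>
     (\<forall>x \<in> {..<k} \<rightarrow>\<^sub>E B. f x \<noteq> 0 \<longrightarrow> x 0 < x (k - 1) \<or> (\<forall>l<k. x l = x 0))"

lemma triangular_support_fun_upd_lt:
  assumes tri: "triangular_support k B f" and "k \<ge> 2"
    and x: "x \<in> {..<k} \<rightarrow>\<^sub>E B" and i: "i < k" and "c \<in> B"
    and nz: "f (x(i := c)) \<noteq> 0"
    and ne: "x 0 \<noteq> c" "x (k - 1) \<noteq> c"
    and first: "i = 0 \<Longrightarrow> x 0 \<le> c" and last: "i = k - 1 \<Longrightarrow> c \<le> x (k - 1)"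
  shows "x 0 < x (k - 1)"
proof -
  let ?y = "x(i := c)"
  have "?y \<in> {..<k} \<rightarrow>\<^sub>E B" using PiE_fun_upd_same[OF x] i \<open>c \<in> B\<close> by simp
  then have "?y 0 < ?y (k - 1) \<or> (\<forall>l<k. ?y l = ?y 0)"
    using tri nz unfolding triangular_support_def by blast
  moreover have k: "0 \<noteq> k - 1" "k - 1 < k" using \<open>k \<ge> 2\<close> by auto
  ultimately have y: "?y 0 < ?y (k - 1) \<or> ?y (k - 1) = ?y 0 \<and> ?y i = ?y 0"
    using i by blast
  consider "i = 0" | "i = k - 1" | "i \<noteq> 0" "i \<noteq> k - 1" by blast
  then show ?thesis
  proof cases
    case 1
    then have "c < x (k - 1)" using y k(1) ne(2) by auto
    then show ?thesis using first 1 ne(1) by auto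
  next
    case 2
    then have "x 0 < c" using y k(1) ne(1) by auto
    then show ?thesis using last 2 ne(2) by auto
  next
    case 3
    then show ?thesis using y ne(1) by auto
  qed
qed

definition elim_pivot :: "nat \<Rightarrow> nat \<Rightarrow> 'a::linorder set \<Rightarrow> ('a \<Rightarrow> 'b::zero) \<Rightarrow> 'a \<Rightarrow> bool" where
  "elim_pivot k i B h c \<longleftrightarrow> c \<in> B \<and> h c \<noteq> 0 \<and>
     (\<forall>a \<in> B. h a \<noteq> 0 \<longrightarrow> (i = 0 \<longrightarrow> a \<le> c) \<and> (i = k - 1 \<longrightarrow> c \<le> a))"

lemma elim_pivot_exists:
  fixes h :: "'a::linorder \<Rightarrow> 'b::zero"
  assumes "finite B" "a \<in> B" "h a \<noteq> 0" "k \<ge> 2"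
  shows "\<exists>c. elim_pivot k i B h c"
proof -
  define H where "H = {a \<in> B. h a \<noteq> 0}"
  have H: "finite H" "H \<noteq> {}" using assms unfolding H_def by auto
  show ?thesis
  proof (cases "i = 0")
    case True
    then have "i \<noteq> k - 1" using \<open>k \<ge> 2\<close> by simp
    then have "elim_pivot k i B h (Max H)"
      using Max_in[OF H] Max_ge[OF H(1)] unfolding elim_pivot_def H_def by auto
    then show ?thesis ..
  next
    case False
    then have "elim_pivot k i B h (Min H)"
      using Min_in[OF H] Min_le[OF H(1)] unfolding elim_pivot_def H_def by auto
    then show ?thesis ..
  qed
qed

lemma triangular_support_elim_coord:
  assumes tri: "triangular_support k B f" and "k \<ge> 2" "i < k" and pivot: "elim_pivot k i B h c"
  shows "triangular_support k (B - {c}) (elim_coord i h c f)"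
  unfolding triangular_support_def
proof (intro ballI impI)
  fix x assume x': "x \<in> {..<k} \<rightarrow>\<^sub>E B - {c}" and nz: "elim_coord i h c f x \<noteq> 0"
  have x: "x \<in> {..<k} \<rightarrow>\<^sub>E B" using x' PiE_mono[of "{..<k}" "\<lambda>_. B - {c}" "\<lambda>_. B"] by blast
  show "x 0 < x (k - 1) \<or> (\<forall>l<k. x l = x 0)"
  proof (cases "f x = 0")
    case True
    have mem: "x l \<in> B - {c}" if "l < k" for l using PiE_mem[OF x'] that by simp
    have ends: "x 0 \<noteq> c" "x (k - 1) \<noteq> c" "x i \<in> B"
      using mem[of 0] mem[of "k - 1"] mem[of i] \<open>k \<ge> 2\<close> \<open>i < k\<close> by simp_all
    have "h (x i) \<noteq> 0" "f (x(i := c)) \<noteq> 0" using nz True by (auto simp: elim_coord_def)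
    then have "x 0 < x (k - 1)"
      using triangular_support_fun_upd_lt[OF tri \<open>k \<ge> 2\<close> x \<open>i < k\<close>] pivot ends
      unfolding elim_pivot_def by blast
    then show ?thesis ..
  next
    case False
    then show ?thesis using tri x unfolding triangular_support_def by blast
  qed
qed

lemma diagonal_support_elim_coord:
  assumes tri: "triangular_support k B f" and "k \<ge> 2" "i < k" and pivot: "elim_pivot k i B h c"
  shows "{b \<in> B. f (\<lambda>_\<in>{..<k}. b) \<noteq> 0}
    \<subseteq> insert c {b \<in> B - {c}. elim_coord i h c f (\<lambda>_\<in>{..<k}. b) \<noteq> 0}"
proof
  fix b assume b: "b \<in> {b \<in> B. f (\<lambda>_\<in>{..<k}. b) \<noteq> 0}"
  let ?d = "\<lambda>_\<in>{..<k}. b"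
  show "b \<in> insert c {b \<in> B - {c}. elim_coord i h c f (\<lambda>_\<in>{..<k}. b) \<noteq> 0}"
  proof (cases "b = c")
    case True
    then show ?thesis by simp
  next
    case False
    have "b \<in> B" using b by simp
    then have d: "?d \<in> {..<k} \<rightarrow>\<^sub>E B" "?d 0 = b" "?d (k - 1) = b" "?d i = b"
      using \<open>k \<ge> 2\<close> \<open>i < k\<close> by auto
    have "f (?d(i := c)) = 0" if "h b \<noteq> 0"
      using triangular_support_fun_upd_lt[OF tri \<open>k \<ge> 2\<close> d(1) \<open>i < k\<close>] pivot that d
        \<open>b \<in> B\<close> False
      unfolding elim_pivot_def by auto
    then have "elim_coord i h c f ?d = f ?d" using d(4) by (auto simp: elim_coord_def)
    then show ?thesis using b False by simp
  qed
qed

lemma card_diagonal_support_le: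
  assumes "finite B" "k \<ge> 2" "triangular_support k B f"
    and "\<forall>j<r. is_slice B k (gs j)"
    and "\<forall>x \<in> {..<k} \<rightarrow>\<^sub>E B. f x = (\<Sum>j<r. gs j x)"
  shows "card {b \<in> B. f (\<lambda>_\<in>{..<k}. b) \<noteq> 0} \<le> r"
  using assms
proof (induction r arbitrary: B f gs)
  case 0
  then have "{b \<in> B. f (\<lambda>_\<in>{..<k}. b) \<noteq> 0} = {}" by auto
  then show ?case by (metis card.empty order_refl)
next
  case (Suc r)
  have slices: "\<forall>j<r. is_slice B k (gs j)" using Suc.prems(4) by simp
  from Suc.prems(4) have "is_slice B k (gs r)" by simp
  then obtain i h g' where i: "i < k"
    and last: "\<forall>x \<in> {..<k} \<rightarrow>\<^sub>E B. gs r x = h (x i) * g' (x(i := undefined))"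
    unfolding is_slice_def by blast
  show ?case
  proof (cases "\<exists>a\<in>B. h a \<noteq> 0")
    case False
    then have "\<forall>x \<in> {..<k} \<rightarrow>\<^sub>E B. f x = (\<Sum>j<r. gs j x)" using Suc.prems(5) last i by auto
    then show ?thesis using Suc.IH[OF Suc.prems(1-3) slices] by simp
  next
    case True
    then obtain a where "a \<in> B" "h a \<noteq> 0" by blast
    then obtain c where pivot: "elim_pivot k i B h c"
      using elim_pivot_exists[OF Suc.prems(1) _ _ Suc.prems(2)] by blast
    then have c: "c \<in> B" "h c \<noteq> 0" unfolding elim_pivot_def by simp_all
    let ?E = "elim_coord i h c"
    have sub: "{..<k} \<rightarrow>\<^sub>E B - {c} \<subseteq> {..<k} \<rightarrow>\<^sub>E B" by (rule PiE_mono) auto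
    have sum: "\<forall>x \<in> {..<k} \<rightarrow>\<^sub>E B - {c}. ?E f x = (\<Sum>j<r. ?E (gs j) x)"
      using elim_coord_sum[OF Suc.prems(5) _ i c(1)]
        elim_coord_slice_vanishes[OF last _ i c] sub by auto
    have slices': "\<forall>j<r. is_slice (B - {c}) k (?E (gs j))"
      using is_slice_subset[OF is_slice_elim_coord[OF _ i c(1)]] slices by blast
    have "finite (B - {c})" using Suc.prems(1) by simp
    from Suc.IH[OF this Suc.prems(2) triangular_support_elim_coord[OF Suc.prems(3,2) i pivot]
        slices' sum]
    have IH: "card {b \<in> B - {c}. ?E f (\<lambda>_\<in>{..<k}. b) \<noteq> 0} \<le> r" .
    from diagonal_support_elim_coord[OF Suc.prems(3,2) i pivot]
    have "card {b \<in> B. f (\<lambda>_\<in>{..<k}. b) \<noteq> 0}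
        \<le> card (insert c {b \<in> B - {c}. ?E f (\<lambda>_\<in>{..<k}. b) \<noteq> 0})"
      by (rule card_mono[rotated]) (use Suc.prems(1) in simp)
    also have "\<dots> \<le> Suc r" using IH Suc.prems(1) by (simp add: card_insert_if)
    finally show ?thesis .
  qed
qed

lemma slice_rank_decomposition:
  fixes f :: "(nat \<Rightarrow> 'a) \<Rightarrow> 'b::field"
  assumes "finite A" "0 < k"
  obtains gs where "\<forall>j<slice_rank A k f. is_slice A k (gs j)"
    "\<forall>x \<in> {..<k} \<rightarrow>\<^sub>E A. f x = (\<Sum>j<slice_rank A k f. gs j x)"
proof -
  obtain e where e: "bij_betw e {..<card A} A"
    using ex_bij_betw_nat_finite[OF assms(1)] by (auto simp: atLeast0LessThan)
  \<comment> \<open>splitting f according to the value of the first coordinate gives card A slices\<close>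
  define gs where "gs j x = (if x 0 = e j then 1 else 0) * f (x(0 := e j))" for j x
  have "is_slice A k (gs j)" for j
    unfolding is_slice_def
  proof (intro exI[of _ "0::nat"] conjI exI[of _ "\<lambda>a. if a = e j then 1 else 0"]
      exI[of _ "\<lambda>y. f (y(0 := e j))"] ballI)
    fix x :: "nat \<Rightarrow> 'a"
    show "gs j x = (if x 0 = e j then 1 else 0) * f (x(0 := undefined, 0 := e j))"
      by (simp add: gs_def)
  qed (rule assms(2))
  moreover have "f x = (\<Sum>j<card A. gs j x)" if x: "x \<in> {..<k} \<rightarrow>\<^sub>E A" for x
  proof -
    have "(\<Sum>j<card A. gs j x) = (\<Sum>a\<in>A. (if x 0 = a then 1 else 0) * f (x(0 := a)))"
      unfolding gs_def by (rule sum.reindex_bij_betw[OF e])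
    also have "\<dots> = f (x(0 := x 0))"
      using PiE_mem[OF x, of 0] assms by (simp add: if_distrib if_distribR sum.delta' cong: if_cong)
    finally show ?thesis by simp
  qed
  ultimately have "\<exists>gs. (\<forall>j<card A. is_slice A k (gs j))
      \<and> (\<forall>x \<in> {..<k} \<rightarrow>\<^sub>E A. f x = (\<Sum>j<card A. gs j x))" by blast
  then have "\<exists>gs. (\<forall>j<slice_rank A k f. is_slice A k (gs j))
      \<and> (\<forall>x \<in> {..<k} \<rightarrow>\<^sub>E A. f x = (\<Sum>j<slice_rank A k f. gs j x))"
    unfolding slice_rank_def by (rule LeastI)
  then show ?thesis using that by blast
qed

lemma triangular_support_if_between:
  assumes "0 < k"
    and "\<forall>x \<in> {..<k} \<rightarrow>\<^sub>E A. f x \<noteq> 0 \<longrightarrow> (\<forall>i<k. x 0 \<le> x i \<and> x i \<le> x (k - 1))"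
  shows "triangular_support k A f"
  unfolding triangular_support_def
proof (intro ballI impI)
  fix x assume "x \<in> {..<k} \<rightarrow>\<^sub>E A" "f x \<noteq> 0"
  then have between: "\<forall>i<k. x 0 \<le> x i \<and> x i \<le> x (k - 1)" using assms(2) by blast
  show "x 0 < x (k - 1) \<or> (\<forall>l<k. x l = x 0)"
  proof (cases "x 0 = x (k - 1)")
    case True
    then show ?thesis using between by (auto intro: order.antisym)
  next
    case False
    have "x 0 \<le> x (k - 1)" using between assms(1) by blast
    then show ?thesis using False by (simp add: order.strict_iff_order)
  qed
qed

theorem lemma2:
  fixes A :: "'a::linorder set" and k :: nat and f :: "(nat \<Rightarrow> 'a) \<Rightarrow> 'b::field"
  assumes "finite A" and "k \<ge> 2"
    and "\<forall>x \<in> {..<k} \<rightarrow>\<^sub>E A. f x \<noteq> 0 \<longrightarrow> (\<forall>i<k. x 0 \<le> x i \<and> x i \<le> x (k - 1))"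
  shows "card {a \<in> A. f (\<lambda>i\<in>{..<k}. a) \<noteq> 0} \<le> slice_rank A k f"
proof -
  have "0 < k" using assms(2) by simp
  obtain gs where "\<forall>j<slice_rank A k f. is_slice A k (gs j)"
    "\<forall>x \<in> {..<k} \<rightarrow>\<^sub>E A. f x = (\<Sum>j<slice_rank A k f. gs j x)"
    using slice_rank_decomposition[OF assms(1) \<open>0 < k\<close>] by blast
  then show ?thesis
    using card_diagonal_support_le[OF assms(1,2) triangular_support_if_between[OF \<open>0 < k\<close> assms(3)]]
    by blast
qed

end
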